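(* Let $a\ge 1$, and let $(c,d),(e,f)\in\mathcal{B}$ with $d$ and $f$ odd, $d\neq f$, and $\max\{c,c+d,e,e+f\}<a$. Then $U=\{(a,0),(c,d),(e,f)\}\subseteq\mathcal{B}$ is unavoidable.
   Context: The bicyclic inverse semigroup is $\mathcal{B}=\{(a,b)\in\mathbb{Z}\times\mathbb{Z}\mid a\ge 0,\ a+b\ge 0\}$ with multiplication $(a,b)(c,d)=(\max\{c+d,a\}-d,\ b+d)$. A subset $U\subseteq\mathcal{B}$ is called avoidable if $\mathcal{B}$ can be partitioned into two subsets $A$ and $B$ such that no element of $U$ can be written as a product $xy$ of two distinct elements $x\neq y$ both in $A$, or both in $B$. A set is unavoidable if it is not avoidable. *)

theory Defs
  imports Main
begin

definition bicyclic :: "(int \<times> int) set" where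
  "bicyclic = {(a, b). a \<ge> 0 \<and> a + b \<ge> 0}"

fun bmult :: "int \<times> int \<Rightarrow> int \<times> int \<Rightarrow> int \<times> int" where
  "bmult (a, b) (c, d) = (max (c + d) a - d, b + d)"

definition avoidable :: "(int \<times> int) set \<Rightarrow> bool" where
  "avoidable U \<longleftrightarrow> (\<exists>A B. A \<union> B = bicyclic \<and> A \<inter> B = {} \<and>
     (\<forall>x\<in>A. \<forall>y\<in>A. x \<noteq> y \<longrightarrow> bmult x y \<notin> U) \<and>
     (\<forall>x\<in>B. \<forall>y\<in>B. x \<noteq> y \<longrightarrow> bmult x y \<notin> U))"

definition unavoidable :: "(int \<times> int) set \<Rightarrow> bool" where
  "unavoidable U \<longleftrightarrow> \<not> avoidable U"

end

theory Submission
  imports Defs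
begin

text \<open>A partition witnessing avoidability is a 2-colouring of the graph on \<open>bicyclic\<close> joining
  distinct \<open>x\<close>, \<open>y\<close> whenever \<open>x y \<in> U\<close>. For \<open>U\<close> as in the theorem, this graph contains a
  triangle on elements of the form \<open>(max 0 (-k), k)\<close>: the odd cycles through \<open>(a, 0)\<close> and \<open>(c, d)\<close>
  force the colours of \<open>k\<close> and \<open>d - k\<close> to differ, those through \<open>(a, 0)\<close> alone force the colours of
  \<open>g\<close> and \<open>-g\<close> to differ for \<open>0 < \<bar>g\<bar> \<le> a\<close>, and with \<open>d = 2p + 1\<close>, \<open>f = 2q + 1\<close> the three
  elements \<open>p + q + 1\<close>, \<open>p - q\<close>, \<open>q - p\<close> are pairwise forced apart.\<close>

definition separates :: "(int \<times> int) set \<Rightarrow> (int \<times> int) set \<Rightarrow> bool" where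
  "separates U A \<longleftrightarrow> (\<forall>x\<in>bicyclic. \<forall>y\<in>bicyclic.
     x \<noteq> y \<longrightarrow> bmult x y \<in> U \<longrightarrow> (x \<in> A \<longleftrightarrow> y \<notin> A))"

lemma avoidable_imp_separates:
  assumes "avoidable U"
  obtains A where "separates U A"
proof -
  from assms obtain A B where "A \<union> B = bicyclic" "A \<inter> B = {}"
    "\<forall>x\<in>A. \<forall>y\<in>A. x \<noteq> y \<longrightarrow> bmult x y \<notin> U"
    "\<forall>x\<in>B. \<forall>y\<in>B. x \<noteq> y \<longrightarrow> bmult x y \<notin> U"
    unfolding avoidable_def by blast
  then have "separates U A"
    unfolding separates_def by blast
  then show thesis ..
qed

lemma separatesD:
  assumes "separates U A" "x \<in> bicyclic" "y \<in> bicyclic" "x \<noteq> y" "bmult x y \<in> U"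
  shows "x \<in> A \<longleftrightarrow> y \<notin> A"
  using assms unfolding separates_def by blast

definition low :: "int \<Rightarrow> int \<times> int" where
  "low k = (max 0 (-k), k)"

lemma low_in_bicyclic [simp]: "low k \<in> bicyclic"
  by (auto simp: low_def bicyclic_def)

lemma separates_low_pos_neg:
  assumes sep: "separates U A" and "(a, 0) \<in> U" and "0 < m" "m \<le> a"
  shows "low m \<in> A \<longleftrightarrow> low (-m) \<notin> A"
proof -
  \<comment> \<open>path \<open>low m\<close>, \<open>(a, -m)\<close>, \<open>(a, m)\<close>, \<open>low (-m)\<close> of length 3, every edge with product \<open>(a, 0)\<close>\<close>
  have in_bic: "(a, -m) \<in> bicyclic" "(a, m) \<in> bicyclic"
    using assms by (auto simp: bicyclic_def)
  have "low m \<in> A \<longleftrightarrow> (a, -m) \<notin> A"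
    by (rule separatesD[OF sep]) (use assms in_bic in \<open>auto simp: low_def bicyclic_def\<close>)
  moreover have "(a, -m) \<in> A \<longleftrightarrow> (a, m) \<notin> A"
    by (rule separatesD[OF sep]) (use assms in_bic in \<open>auto simp: max_def\<close>)
  moreover have "low (-m) \<in> A \<longleftrightarrow> (a, m) \<notin> A"
    by (rule separatesD[OF sep]) (use assms in_bic in \<open>auto simp: low_def bicyclic_def\<close>)
  ultimately show ?thesis by blast
qed

lemma separates_low_opposite:
  assumes "separates U A" "(a, 0) \<in> U" "g \<noteq> 0" "\<bar>g\<bar> \<le> a"
  shows "low g \<in> A \<longleftrightarrow> low (-g) \<notin> A"
proof (cases "g > 0")
  case True
  with assms show ?thesis by (intro separates_low_pos_neg) auto
next
  case False
  with assms separates_low_pos_neg[of U A a "-g"] show ?thesis by auto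
qed

lemma separates_low_reflect_le:
  assumes sep: "separates U A" and "(a, 0) \<in> U" "(c, d) \<in> U" and "(c, d) \<in> bicyclic"
    and "c < a" "odd d" "k \<le> c + d"
  shows "low k \<in> A \<longleftrightarrow> low (d - k) \<notin> A"
proof -
  have bounds: "c \<ge> 0" "c + d \<ge> 0" "k \<noteq> d - k"
    using \<open>(c, d) \<in> bicyclic\<close> \<open>odd d\<close> by (auto simp: bicyclic_def)
  \<comment> \<open>path \<open>low k\<close>, \<open>(c, d - k)\<close>, \<open>(a + d - k, k - d)\<close>, \<open>low (d - k)\<close> of length 3; the first
    edge has product \<open>(c, d)\<close>, the other two \<open>(a, 0)\<close>\<close>
  have in_bic: "(c, d - k) \<in> bicyclic" "(a + d - k, k - d) \<in> bicyclic"
    using assms bounds by (auto simp: bicyclic_def)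
  have "low k \<in> A \<longleftrightarrow> (c, d - k) \<notin> A"
    by (rule separatesD[OF sep]) (use assms bounds in_bic in \<open>auto simp: low_def bicyclic_def\<close>)
  moreover have "(a + d - k, k - d) \<in> A \<longleftrightarrow> (c, d - k) \<notin> A"
    by (rule separatesD[OF sep]) (use assms bounds in_bic in \<open>auto simp: max_def\<close>)
  moreover have "(a + d - k, k - d) \<in> A \<longleftrightarrow> low (d - k) \<notin> A"
    by (rule separatesD[OF sep]) (use assms bounds in_bic in \<open>auto simp: low_def max_def bicyclic_def\<close>)
  ultimately show ?thesis by blast
qed

lemma separates_low_reflect:
  assumes "separates U A" "(a, 0) \<in> U" "(c, d) \<in> U" "(c, d) \<in> bicyclic" "c < a" "odd d"
  shows "low k \<in> A \<longleftrightarrow> low (d - k) \<notin> A"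
proof (cases "k \<le> c + d")
  case True
  with assms show ?thesis by (rule separates_low_reflect_le)
next
  case False
  with assms have "d - k \<le> c + d" by (simp add: bicyclic_def)
  with assms separates_low_reflect_le[of U A a c d "d - k"] show ?thesis by auto
qed

theorem lemma5p3:
  fixes a c d e f :: int
  assumes "a \<ge> 1"
    and "(c, d) \<in> bicyclic" and "(e, f) \<in> bicyclic"
    and "odd d" and "odd f" and "d \<noteq> f"
    and "Max {c, c + d, e, e + f} < a"
  shows "unavoidable {(a, 0), (c, d), (e, f)}"
  unfolding unavoidable_def
proof
  let ?U = "{(a, 0), (c, d), (e, f)}"
  assume "avoidable ?U"
  then obtain A where sep: "separates ?U A"
    by (rule avoidable_imp_separates)
  have bounds: "c < a" "c + d < a" "e < a" "e + f < a" "0 \<le> c" "0 \<le> e" "0 \<le> c + d" "0 \<le> e + f"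
    using assms(2,3,7) by (auto simp: bicyclic_def)
  obtain p q where "d = 2 * p + 1" "f = 2 * q + 1"
    using \<open>odd d\<close> \<open>odd f\<close> by (metis oddE)
  then have reflections: "d - (p + q + 1) = p - q" "f - (p + q + 1) = - (p - q)"
    and "p - q \<noteq> 0" "\<bar>p - q\<bar> \<le> a"
    using \<open>d \<noteq> f\<close> bounds by auto
  have "low (p + q + 1) \<in> A \<longleftrightarrow> low (p - q) \<notin> A"
    using separates_low_reflect[OF sep, of a c d "p + q + 1"] assms(2,4) bounds(1) reflections(1)
    by simp
  moreover have "low (p + q + 1) \<in> A \<longleftrightarrow> low (- (p - q)) \<notin> A"
    using separates_low_reflect[OF sep, of a e f "p + q + 1"] assms(3,5) bounds(3) reflections(2)
    by simp
  moreover have "low (p - q) \<in> A \<longleftrightarrow> low (- (p - q)) \<notin> A"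
    by (rule separates_low_opposite[OF sep]) (use \<open>p - q \<noteq> 0\<close> \<open>\<bar>p - q\<bar> \<le> a\<close> in auto)
  ultimately show False by blast
qed

end
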